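(* Let $N\ge2$, $x_1>x_2>\cdots>x_N$ be real, and $\rho=\sum_{j=1}^N\rho_j\delta_{x_j}$ with $\rho_j>0$, $\sum\rho_j=1$. For $t\ge0$ let $\rho_t=e^{2tx}d\rho(x)/\int e^{2tx}d\rho(x)$, and for $1\le j\le N$ let $x_1^{(j)}(t)>\cdots>x_j^{(j)}(t)$ be the zeros of the monic orthogonal polynomial $P_j(x;\rho_t)$. Then for each $j=1,\dots,N$ and $k=1,\dots,j$, $\lim_{t\to\infty}x_k^{(j)}(t)=x_k$, and moreover $|x_k^{(j)}(t)-x_k|=O(e^{-ct})$ as $t\to\infty$, where $c=\min_{i=1,\dots,N-1}(x_i-x_{i+1})$.
   Context: $P_j(x;\rho_t)$ is the unique monic polynomial of degree $j$ orthogonal in $L^2(\rho_t)$ to all polynomials of degree less than $j$; its zeros are real and simple. *)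

theory Defs
  imports "HOL-Analysis.Analysis" "HOL-Computational_Algebra.Polynomial" "HOL-Library.Landau_Symbols"
begin

text \<open>Discrete measure rho = sum over i in 1..N of rho i times the Dirac mass at x i.
  Tilted measure rho_t has weights rho i * exp(2 t x i) / normalisation.\<close>
definition tilted_weight :: "nat \<Rightarrow> (nat \<Rightarrow> real) \<Rightarrow> (nat \<Rightarrow> real) \<Rightarrow> real \<Rightarrow> nat \<Rightarrow> real" where
  "tilted_weight N \<rho> x t i =
     \<rho> i * exp (2 * t * x i) / (\<Sum>l=1..N. \<rho> l * exp (2 * t * x l))"

definition disc_inner :: "nat \<Rightarrow> (nat \<Rightarrow> real) \<Rightarrow> (nat \<Rightarrow> real) \<Rightarrow> real poly \<Rightarrow> real poly \<Rightarrow> real" where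
  "disc_inner N w x p q = (\<Sum>i=1..N. w i * poly p (x i) * poly q (x i))"

definition is_monic_OP :: "nat \<Rightarrow> (nat \<Rightarrow> real) \<Rightarrow> (nat \<Rightarrow> real) \<Rightarrow> nat \<Rightarrow> real poly \<Rightarrow> bool" where
  "is_monic_OP N w x j p \<longleftrightarrow>
     degree p = j \<and> lead_coeff p = 1 \<and>
     (\<forall>q. degree q < j \<longrightarrow> disc_inner N w x p q = 0)"

definition monic_OP :: "nat \<Rightarrow> (nat \<Rightarrow> real) \<Rightarrow> (nat \<Rightarrow> real) \<Rightarrow> nat \<Rightarrow> real poly" where
  "monic_OP N w x j = (THE p. is_monic_OP N w x j p)"

definition kth_largest_zero :: "real poly \<Rightarrow> nat \<Rightarrow> real" where
  "kth_largest_zero p k = rev (sorted_list_of_set {z. poly p z = 0}) ! (k - 1)"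

end

theory Submission
  imports Defs
begin

text \<open>
  The monic orthogonal polynomial P_j of rho_t minimises the L^2(rho_t) norm among monic
  polynomials of degree j. Comparing it with the node polynomial Q_j = (X - x_1) ... (X - x_j),
  which vanishes at the first j nodes, gives rho_t(x_i) P_j(x_i)^2 <= sum_{l > j} rho_t(x_l) Q_j(x_l)^2,
  and tilting makes every weight at x_l, l > j, smaller than the weight at x_i, i <= j, by a
  factor e^(-2ct). So P_j - Q_j, of degree < j, is O(e^(-ct)) at x_1, ..., x_j, hence, by
  Lagrange interpolation, uniformly on compact sets. Since Q_j changes sign by a definite amount
  across each x_k, P_j has a zero within O(e^(-ct)) of each x_k, and these j zeros are all of
  its zeros.
\<close>


lemma disc_inner_commute: "disc_inner N w x p q = disc_inner N w x q p"
  unfolding disc_inner_def by (simp add: mult_ac)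

lemma disc_inner_diff_left:
  "disc_inner N w x (p - q) r = disc_inner N w x p r - disc_inner N w x q r"
  unfolding disc_inner_def by (simp add: algebra_simps sum_subtractf)

lemma disc_inner_smult_left:
  "disc_inner N w x (smult a p) q = a * disc_inner N w x p q"
  unfolding disc_inner_def by (simp add: algebra_simps sum_distrib_left)

lemma disc_inner_sum_left:
  "disc_inner N w x (\<Sum>i\<in>A. f i) q = (\<Sum>i\<in>A. disc_inner N w x (f i) q)"
  unfolding disc_inner_def poly_sum sum_distrib_left sum_distrib_right by (rule sum.swap)

lemma disc_inner_self_nonneg:
  assumes "\<forall>i\<in>{1..N}. 0 \<le> w i"
  shows "0 \<le> disc_inner N w x p p"
  unfolding disc_inner_def using assms by (intro sum_nonneg) (simp add: mult.assoc)

lemma disc_inner_self_pos: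
  assumes "\<forall>i\<in>{1..N}. 0 < w i" and "inj_on x {1..N}" and "p \<noteq> 0" and "degree p < N"
  shows "0 < disc_inner N w x p p"
proof -
  have terms_nonneg: "\<forall>i\<in>{1..N}. 0 \<le> w i * poly p (x i) * poly p (x i)"
    using assms(1) by (simp add: less_imp_le mult.assoc)
  have "\<exists>i\<in>{1..N}. poly p (x i) \<noteq> 0"
  proof (rule ccontr)
    assume "\<not> ?thesis"
    then have "p = 0"
      using assms(2,4) by (intro poly_eqI_degree[of "x ` {1..N}"]) (auto simp: card_image)
    with \<open>p \<noteq> 0\<close> show False ..
  qed
  then obtain i where i: "i \<in> {1..N}" "poly p (x i) \<noteq> 0" ..
  have "0 < w i * poly p (x i) * poly p (x i)"
    using assms(1) i by (simp add: mult.assoc flip: power2_eq_square)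
  also have "\<dots> \<le> disc_inner N w x p p"
    unfolding disc_inner_def using i terms_nonneg by (intro member_le_sum) auto
  finally show ?thesis .
qed

lemma degree_less_if_coeff_eq_0:
  fixes p :: "'a::zero poly"
  assumes "degree p \<le> n" "coeff p n = 0" "p \<noteq> 0"
  shows "degree p < n"
  using assms by (metis le_neq_implies_less leading_coeff_0_iff)

lemma degree_diff_less_if_lead_coeff_eq:
  fixes p q :: "'a::ab_group_add poly"
  assumes "degree p = j" "degree q = j" "lead_coeff p = lead_coeff q" "p \<noteq> q"
  shows "degree (p - q) < j"
  using assms by (intro degree_less_if_coeff_eq_0 degree_diff_le) auto

lemma is_monic_OP_unique:
  assumes "\<forall>i\<in>{1..N}. 0 < w i" "inj_on x {1..N}" "j \<le> N"
    and "is_monic_OP N w x j p" "is_monic_OP N w x j q"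
  shows "p = q"
proof (rule ccontr)
  assume "p \<noteq> q"
  then have "degree (p - q) < j"
    using assms(4,5) unfolding is_monic_OP_def by (intro degree_diff_less_if_lead_coeff_eq) auto
  have "disc_inner N w x (p - q) (p - q) = disc_inner N w x p (p - q) - disc_inner N w x q (p - q)"
    by (rule disc_inner_diff_left)
  also have "\<dots> = 0"
    using assms(4,5) \<open>degree (p - q) < j\<close> unfolding is_monic_OP_def by simp
  finally show False
    using disc_inner_self_pos[of N w x "p - q"] \<open>p \<noteq> q\<close> \<open>degree (p - q) < j\<close> assms(1-3)
    by simp
qed

lemma orthogonal_to_lower_degree_if_orthogonal_to_monic_basis:
  assumes basis: "\<And>i. i < j \<Longrightarrow> degree (B i) = i \<and> lead_coeff (B i) = 1"
    and orth: "\<And>i. i < j \<Longrightarrow> disc_inner N w x (B i) p = 0"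
    and "degree q < j"
  shows "disc_inner N w x q p = 0"
  using \<open>degree q < j\<close>
proof (induction "degree q" arbitrary: q rule: less_induct)
  case less
  define n where "n = degree q"
  define r where "r = q - smult (coeff q n) (B n)"
  have Bn: "degree (B n) = n" "coeff (B n) n = 1"
    using basis[of n] less.prems by (auto simp: n_def)
  have "r = 0 \<or> degree r < n"
    unfolding r_def using Bn
    by (auto simp: n_def intro!: degree_less_if_coeff_eq_0 degree_diff_le
        intro: order.trans[OF degree_smult_le])
  then have "disc_inner N w x r p = 0"
  proof
    assume "degree r < n"
    then show ?thesis using less.prems by (intro less.hyps) (auto simp: n_def)
  qed (simp add: disc_inner_def)
  moreover have "disc_inner N w x r p = disc_inner N w x q p - coeff q n * disc_inner N w x (B n) p"
    unfolding r_def by (simp add: disc_inner_diff_left disc_inner_smult_left)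
  ultimately show ?case using orth[of n] less.prems by (simp add: n_def)
qed

lemma is_monic_OP_gram_schmidt:
  assumes P: "\<And>i. i < j \<Longrightarrow> degree (P i) = i \<and> lead_coeff (P i) = 1"
    and P_pairwise_orth: "\<And>i m. i < j \<Longrightarrow> m < j \<Longrightarrow> i \<noteq> m \<Longrightarrow> disc_inner N w x (P i) (P m) = 0"
    and P_norm_pos: "\<And>i. i < j \<Longrightarrow> 0 < disc_inner N w x (P i) (P i)"
  shows "is_monic_OP N w x j (monom 1 j
    - (\<Sum>i<j. smult (disc_inner N w x (monom 1 j) (P i) / disc_inner N w x (P i) (P i)) (P i)))"
proof -
  define a where "a i = disc_inner N w x (monom 1 j) (P i) / disc_inner N w x (P i) (P i)" for i
  define S where "S = (\<Sum>i<j. smult (a i) (P i))"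
  define p where "p = monom 1 j - S"
  have "degree S \<le> j" "coeff S j = 0"
    using P unfolding S_def
    by (auto simp: coeff_sum coeff_eq_0 intro!: degree_sum_le intro: order.trans[OF degree_smult_le])
  then have "degree p \<le> j" "coeff p j = 1"
    unfolding p_def by (auto intro!: degree_diff_le simp: degree_monom_le)
  then have p_monic: "degree p = j \<and> lead_coeff p = 1"
    by (metis le_antisym le_degree zero_neq_one)
  have "disc_inner N w x p (P m) = 0" if "m < j" for m
  proof -
    have "(\<Sum>i<j. a i * disc_inner N w x (P i) (P m))
        = (\<Sum>i<j. if i = m then a m * disc_inner N w x (P m) (P m) else 0)"
      using that P_pairwise_orth by (intro sum.cong) auto
    also have "\<dots> = a m * disc_inner N w x (P m) (P m)" using that by simp
    finally show ?thesis
      using P_norm_pos[OF that] unfolding p_def S_def a_def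
      by (simp add: disc_inner_diff_left disc_inner_sum_left disc_inner_smult_left)
  qed
  then have P_orth_p: "disc_inner N w x (P m) p = 0" if "m < j" for m
    using that by (simp add: disc_inner_commute)
  have "disc_inner N w x q p = 0" if "degree q < j" for q
    by (rule orthogonal_to_lower_degree_if_orthogonal_to_monic_basis[OF P P_orth_p that])
  then show ?thesis
    using p_monic disc_inner_commute unfolding is_monic_OP_def p_def S_def a_def by metis
qed

lemma is_monic_OP_monic_OP:
  assumes "\<forall>i\<in>{1..N}. 0 < w i" "inj_on x {1..N}" "j \<le> N"
  shows "is_monic_OP N w x j (monic_OP N w x j)"
  using \<open>j \<le> N\<close>
proof (induction j rule: less_induct)
  case (less j)
  define P where "P i = monic_OP N w x i" for i
  have "is_monic_OP N w x i (P i)" if "i < j" for i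
    using less that unfolding P_def by simp
  then have P: "degree (P i) = i \<and> lead_coeff (P i) = 1"
    and P_orth: "\<And>q. degree q < i \<Longrightarrow> disc_inner N w x (P i) q = 0" if "i < j" for i
    using that unfolding is_monic_OP_def by blast+
  have P_pairwise_orth: "disc_inner N w x (P i) (P m) = 0" if "i < j" "m < j" "i \<noteq> m" for i m
    using P_orth[of i "P m"] P_orth[of m "P i"] P that
    by (cases "m < i") (auto simp: disc_inner_commute)
  have P_norm_pos: "0 < disc_inner N w x (P i) (P i)" if "i < j" for i
    using P[OF that] less.prems that assms(1,2) by (intro disc_inner_self_pos) auto
  have "\<exists>p. is_monic_OP N w x j p"
    using is_monic_OP_gram_schmidt[OF P P_pairwise_orth P_norm_pos] ..
  then have "\<exists>!p. is_monic_OP N w x j p"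
    using is_monic_OP_unique[OF assms(1,2) less.prems] by blast
  then show ?case unfolding monic_OP_def by (rule theI')
qed

lemma disc_inner_add_self:
  "disc_inner N w x (p + q) (p + q)
    = disc_inner N w x p p + 2 * disc_inner N w x p q + disc_inner N w x q q"
  unfolding disc_inner_def by (simp add: algebra_simps sum.distrib sum_distrib_left)

lemma is_monic_OP_norm_le:
  assumes "\<forall>i\<in>{1..N}. 0 \<le> w i" "is_monic_OP N w x j p"
    and "degree q = j" "lead_coeff q = 1"
  shows "disc_inner N w x p p \<le> disc_inner N w x q q"
proof (cases "q = p")
  case False
  define r where "r = q - p"
  have "degree r < j"
    using assms(2-4) False unfolding r_def is_monic_OP_def
    by (intro degree_diff_less_if_lead_coeff_eq) auto
  then have "disc_inner N w x p r = 0"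
    using assms(2) unfolding is_monic_OP_def by simp
  moreover have "q = p + r" unfolding r_def by simp
  ultimately have "disc_inner N w x q q = disc_inner N w x p p + disc_inner N w x r r"
    by (simp add: disc_inner_add_self)
  then show ?thesis using disc_inner_self_nonneg[OF assms(1)] by simp
qed simp

definition node_poly :: "(nat \<Rightarrow> real) \<Rightarrow> nat \<Rightarrow> real poly" where
  "node_poly x j = (\<Prod>m\<in>{1..j}. [:- x m, 1:])"

lemma degree_node_poly: "degree (node_poly x j) = j"
  unfolding node_poly_def by (subst degree_prod_eq_sum_degree) auto

lemma lead_coeff_node_poly: "lead_coeff (node_poly x j) = 1"
  unfolding node_poly_def by (simp add: lead_coeff_prod)

lemma poly_node_poly: "poly (node_poly x j) z = (\<Prod>m\<in>{1..j}. z - x m)"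
  unfolding node_poly_def poly_prod by simp

lemma poly_node_poly_node: "i \<in> {1..j} \<Longrightarrow> poly (node_poly x j) (x i) = 0"
  unfolding poly_node_poly by (intro prod_zero) auto

lemma is_monic_OP_value_le:
  assumes "\<forall>i\<in>{1..N}. 0 \<le> w i" "is_monic_OP N w x j p" "j \<le> N" "i \<in> {1..N}"
  shows "w i * (poly p (x i))\<^sup>2 \<le> (\<Sum>l\<in>{Suc j..N}. w l * (poly (node_poly x j) (x l))\<^sup>2)"
proof -
  have "w i * (poly p (x i))\<^sup>2 \<le> disc_inner N w x p p"
    unfolding disc_inner_def power2_eq_square mult.assoc using assms(1,4)
    by (intro member_le_sum) auto
  also have "\<dots> \<le> disc_inner N w x (node_poly x j) (node_poly x j)"
    using assms(1,2) degree_node_poly lead_coeff_node_poly by (rule is_monic_OP_norm_le)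
  also have "\<dots> = (\<Sum>l\<in>{Suc j..N}. w l * (poly (node_poly x j) (x l))\<^sup>2)"
  proof -
    have "{1..N} = {1..j} \<union> {Suc j..N}" using assms(3) by auto
    then show ?thesis
      unfolding disc_inner_def
      by (simp add: sum.union_disjoint poly_node_poly_node power2_eq_square mult.assoc)
  qed
  finally show ?thesis .
qed

definition lagrange_basis :: "(nat \<Rightarrow> real) \<Rightarrow> nat \<Rightarrow> nat \<Rightarrow> real poly" where
  "lagrange_basis x j i = (\<Prod>m\<in>{1..j} - {i}. smult (1 / (x i - x m)) [:- x m, 1:])"

lemma poly_lagrange_basis_node:
  assumes "inj_on x {1..j}" "i \<in> {1..j}" "l \<in> {1..j}"
  shows "poly (lagrange_basis x j i) (x l) = (if l = i then 1 else 0)"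
proof (cases "l = i")
  case True
  have "poly (smult (1 / (x i - x m)) [:- x m, 1:]) (x i) = 1" if "m \<in> {1..j} - {i}" for m
  proof -
    have "x i - x m \<noteq> 0" using assms(1,2) that by (auto dest: inj_onD)
    then show ?thesis by (simp add: diff_divide_distrib[symmetric])
  qed
  then show ?thesis
    using True unfolding lagrange_basis_def poly_prod by (simp add: prod.neutral)
next
  case False
  have "poly (lagrange_basis x j i) (x l) = 0"
    unfolding lagrange_basis_def poly_prod using False assms(3)
    by (intro prod_zero) (auto intro!: bexI[of _ l])
  then show ?thesis using False by simp
qed

lemma degree_lagrange_basis_less:
  assumes "i \<in> {1..j}"
  shows "degree (lagrange_basis x j i) < j"
proof -
  have "degree (lagrange_basis x j i) \<le> (\<Sum>m\<in>{1..j} - {i}. 1)"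
    unfolding lagrange_basis_def
    by (intro degree_prod_sum_le[THEN order.trans] sum_mono)
      (auto intro: order.trans[OF degree_smult_le])
  then show ?thesis using assms by auto
qed

lemma lagrange_interpolation:
  assumes "inj_on x {1..j}" "degree p < j"
  shows "poly p z = (\<Sum>i\<in>{1..j}. poly p (x i) * poly (lagrange_basis x j i) z)"
proof -
  define q where "q = (\<Sum>i\<in>{1..j}. smult (poly p (x i)) (lagrange_basis x j i))"
  have "degree q < j"
    unfolding q_def using assms(2) degree_lagrange_basis_less
    by (intro degree_sum_less) (auto intro: le_less_trans[OF degree_smult_le])
  moreover have "poly q (x l) = poly p (x l)" if "l \<in> {1..j}" for l
  proof -
    have "poly q (x l) = (\<Sum>i\<in>{1..j}. poly p (x i) * (if l = i then 1 else 0))"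
      unfolding q_def poly_sum using poly_lagrange_basis_node[OF assms(1) _ that] by simp
    also have "\<dots> = poly p (x l)" using that by (simp add: if_distrib cong: if_cong)
    finally show ?thesis .
  qed
  ultimately have "p = q"
    using assms by (intro poly_eqI_degree[of "x ` {1..j}"]) (auto simp: card_image)
  then have "poly p z = poly q z" by simp
  then show ?thesis unfolding q_def poly_sum by simp
qed

lemma poly_bounded_by_node_values:
  fixes x :: "nat \<Rightarrow> real"
  assumes "inj_on x {1..j}" "compact S"
  obtains G where "\<And>p \<epsilon> z. degree p < j \<Longrightarrow> \<forall>i\<in>{1..j}. \<bar>poly p (x i)\<bar> \<le> \<epsilon> \<Longrightarrow> z \<in> S
    \<Longrightarrow> \<bar>poly p z\<bar> \<le> G * \<epsilon>"
proof -
  define g where "g z = (\<Sum>i\<in>{1..j}. \<bar>poly (lagrange_basis x j i) z\<bar>)" for z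
  have "continuous_on S g" unfolding g_def by (intro continuous_intros)
  then have "bounded (g ` S)" using assms(2) by (intro compact_imp_bounded compact_continuous_image)
  then obtain G where G: "\<forall>z\<in>S. \<bar>g z\<bar> \<le> G" by (auto simp: bounded_real)
  have "\<bar>poly p z\<bar> \<le> G * \<epsilon>"
    if "degree p < j" "\<forall>i\<in>{1..j}. \<bar>poly p (x i)\<bar> \<le> \<epsilon>" "z \<in> S" for p \<epsilon> z
  proof -
    have "1 \<in> {1..j}" using that(1) by simp
    then have "\<bar>poly p (x 1)\<bar> \<le> \<epsilon>" using that(2) by blast
    then have "0 \<le> \<epsilon>" by (rule order_trans[OF abs_ge_zero])
    have "\<bar>poly p z\<bar> = \<bar>\<Sum>i\<in>{1..j}. poly p (x i) * poly (lagrange_basis x j i) z\<bar>"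
      using lagrange_interpolation[OF assms(1) that(1)] by (rule arg_cong)
    also have "\<dots> \<le> (\<Sum>i\<in>{1..j}. \<bar>poly p (x i)\<bar> * \<bar>poly (lagrange_basis x j i) z\<bar>)"
      unfolding abs_mult[symmetric] by (rule sum_abs)
    also have "\<dots> \<le> \<epsilon> * g z"
      unfolding g_def sum_distrib_left using that(2) by (intro sum_mono mult_right_mono) auto
    also have "\<dots> \<le> \<epsilon> * G" using G that(3) \<open>0 \<le> \<epsilon>\<close> by (intro mult_left_mono) auto
    finally show ?thesis by (simp add: mult.commute)
  qed
  then show thesis by (rule that)
qed

text \<open>The cofactor of \<open>x k\<close> has sign \<open>(-1)^(k-1)\<close> near \<open>x k\<close>; bounding products of two of its
  values avoids tracking that sign.\<close>

lemma node_cofactor_product_ge: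
  fixes x :: "nat \<Rightarrow> real" and c z1 z2 :: real
  assumes gap: "\<And>a b. 1 \<le> a \<Longrightarrow> a < b \<Longrightarrow> b \<le> j \<Longrightarrow> c \<le> x a - x b"
    and "0 \<le> c" "k \<in> {1..j}" "\<bar>z1 - x k\<bar> \<le> c / 2" "\<bar>z2 - x k\<bar> \<le> c / 2"
  shows "((c / 2) ^ (j - 1))\<^sup>2 \<le> (\<Prod>m\<in>{1..j} - {k}. z1 - x m) * (\<Prod>m\<in>{1..j} - {k}. z2 - x m)"
proof -
  have factor_ge: "(c / 2) * (c / 2) \<le> (z1 - x m) * (z2 - x m)" if "m \<in> {1..j} - {k}" for m
  proof (cases "m < k")
    case True
    then have "c \<le> x m - x k" using gap that assms(3) by auto
    then have "c / 2 \<le> x m - z1" "c / 2 \<le> x m - z2" using assms(4,5) by linarith+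
    then have "(c / 2) * (c / 2) \<le> (x m - z1) * (x m - z2)" using assms(2) by (intro mult_mono) auto
    then show ?thesis by (simp add: algebra_simps)
  next
    case False
    then have "c \<le> x k - x m" using gap that assms(3) by auto
    then have "c / 2 \<le> z1 - x m" "c / 2 \<le> z2 - x m" using assms(4,5) by linarith+
    then show ?thesis using assms(2) by (intro mult_mono) auto
  qed
  have "((c / 2) ^ (j - 1))\<^sup>2 = ((c / 2) * (c / 2)) ^ (j - 1)"
    by (metis power2_eq_square power_mult_distrib)
  also have "\<dots> = (\<Prod>m\<in>{1..j} - {k}. (c / 2) * (c / 2))"
    using assms(3) by simp
  also have "\<dots> \<le> (\<Prod>m\<in>{1..j} - {k}. (z1 - x m) * (z2 - x m))"
    using factor_ge assms(2) by (intro prod_mono) auto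
  finally show ?thesis by (simp add: prod.distrib)
qed

lemma perturbation_keeps_opposite_signs:
  fixes a b d r1 r2 m :: real
  assumes "0 < a * b" "m \<le> \<bar>a\<bar>" "m \<le> \<bar>b\<bar>" "0 < d" "\<bar>r1\<bar> < d * m" "\<bar>r2\<bar> < d * m"
  shows "(d * a + r1) * (- (d * b) + r2) < 0"
proof -
  have "d * m \<le> d * \<bar>a\<bar>" "d * m \<le> d * \<bar>b\<bar>"
    using assms(2-4) by (simp_all add: mult_left_mono)
  then have "\<bar>r1\<bar> < d * \<bar>a\<bar>" "\<bar>r2\<bar> < d * \<bar>b\<bar>" using assms(5,6) by linarith+
  moreover have "0 < a \<and> 0 < b \<or> a < 0 \<and> b < 0" using assms(1) by (auto simp: zero_less_mult_iff)
  ultimately show ?thesis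
    using assms(4) by (auto simp: mult_pos_neg mult_neg_pos abs_if split: if_splits)
qed

lemma perturbed_node_poly_has_zero_near_node:
  fixes x :: "nat \<Rightarrow> real" and p :: "real poly"
  assumes gap: "\<And>a b. 1 \<le> a \<Longrightarrow> a < b \<Longrightarrow> b \<le> j \<Longrightarrow> c \<le> x a - x b"
    and "0 < \<delta>" "\<delta> \<le> c / 2" "k \<in> {1..j}"
    and close: "\<And>z. \<bar>z - x k\<bar> = \<delta> \<Longrightarrow>
      \<bar>poly p z - poly (node_poly x j) z\<bar> < \<delta> * (c / 2) ^ (j - 1)"
  obtains y where "\<bar>y - x k\<bar> < \<delta>" "poly p y = 0"
proof -
  define m where "m = (c / 2) ^ (j - 1)"
  define cof where "cof z = (\<Prod>l\<in>{1..j} - {k}. z - x l)" for z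
  have "0 < m" unfolding m_def using assms(2,3) by simp
  have node_split: "poly (node_poly x j) z = (z - x k) * cof z" for z
    unfolding poly_node_poly cof_def using assms(4) by (subst prod.remove[of _ k]) auto
  have near: "\<bar>x k + \<delta> - x k\<bar> \<le> c / 2" "\<bar>x k - \<delta> - x k\<bar> \<le> c / 2"
    using assms(2,3) by auto
  have "0 \<le> c" using assms(2,3) by simp
  have cof_ge: "m\<^sup>2 \<le> cof z1 * cof z2" if "\<bar>z1 - x k\<bar> \<le> c / 2" "\<bar>z2 - x k\<bar> \<le> c / 2" for z1 z2
    unfolding m_def cof_def using gap \<open>0 \<le> c\<close> assms(4) that by (rule node_cofactor_product_ge)
  define a b where "a = cof (x k + \<delta>)" and "b = cof (x k - \<delta>)"
  have ab: "m\<^sup>2 \<le> a * b" and aa: "m\<^sup>2 \<le> a\<^sup>2" and bb: "m\<^sup>2 \<le> b\<^sup>2"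
    unfolding a_def b_def power2_eq_square[of "cof _"] using cof_ge near by auto
  have "0 < a * b" using ab \<open>0 < m\<close> by (meson less_le_trans zero_less_power)
  have "m \<le> \<bar>a\<bar>" "m \<le> \<bar>b\<bar>" using aa bb \<open>0 < m\<close> abs_le_square_iff[of m] by auto
  define r1 r2 where "r1 = poly p (x k + \<delta>) - poly (node_poly x j) (x k + \<delta>)"
    and "r2 = poly p (x k - \<delta>) - poly (node_poly x j) (x k - \<delta>)"
  have "\<bar>r1\<bar> < \<delta> * m" "\<bar>r2\<bar> < \<delta> * m"
    unfolding r1_def r2_def m_def using close[of "x k + \<delta>"] close[of "x k - \<delta>"] assms(2) by auto
  then have "(\<delta> * a + r1) * (- (\<delta> * b) + r2) < 0"
    using \<open>0 < a * b\<close> \<open>m \<le> \<bar>a\<bar>\<close> \<open>m \<le> \<bar>b\<bar>\<close> assms(2)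
    by (intro perturbation_keeps_opposite_signs)
  moreover have "poly p (x k + \<delta>) = \<delta> * a + r1" "poly p (x k - \<delta>) = - (\<delta> * b) + r2"
    unfolding a_def b_def r1_def r2_def node_split by simp_all
  ultimately have "poly p (x k - \<delta>) * poly p (x k + \<delta>) < 0" by (simp add: mult.commute)
  then obtain y where "x k - \<delta> < y" "y < x k + \<delta>" "poly p y = 0"
    using poly_IVT[of "x k - \<delta>" "x k + \<delta>" p] assms(2) by auto
  then show thesis by (intro that) auto
qed

lemma rev_sorted_list_of_set_image_nth:
  fixes y :: "nat \<Rightarrow> 'a::linorder"
  assumes dec: "\<And>a b. 1 \<le> a \<Longrightarrow> a < b \<Longrightarrow> b \<le> j \<Longrightarrow> y b < y a" and "k \<in> {1..j}"
  shows "rev (sorted_list_of_set (y ` {1..j})) ! (k - 1) = y k"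
proof -
  define L where "L = map (\<lambda>i. y (j - i)) [0..<j]"
  have "sorted_wrt (<) L"
    unfolding L_def sorted_wrt_map unfolding sorted_wrt_iff_nth_less
  proof (intro allI impI)
    fix a b assume "a < b" "b < length [0..<j]"
    then show "y (j - [0..<j] ! a) < y (j - [0..<j] ! b)" by (intro dec) auto
  qed
  moreover have "set L = y ` {1..j}"
  proof -
    have "(\<lambda>i. j - i) ` {0..<j} = {1..j}"
    proof (intro equalityI subsetI)
      fix i assume "i \<in> {1..j}"
      then show "i \<in> (\<lambda>i. j - i) ` {0..<j}" by (intro image_eqI[of _ _ "j - i"]) auto
    qed auto
    moreover have "set L = y ` ((\<lambda>i. j - i) ` {0..<j})" unfolding L_def by (simp add: image_image)
    ultimately show ?thesis by simp
  qed
  ultimately have "sorted_list_of_set (y ` {1..j}) = L"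
    by (intro strict_sorted_equal) auto
  moreover have "rev L ! (k - 1) = L ! (j - k)"
    using assms(2) unfolding L_def by (subst rev_nth) (auto simp: Suc_diff_le)
  moreover have "L ! (j - k) = y k" using assms(2) by (simp add: L_def)
  ultimately show ?thesis by simp
qed

lemma kth_largest_zero_eqI:
  fixes p :: "real poly"
  assumes "degree p = j" and dec: "\<And>a b. 1 \<le> a \<Longrightarrow> a < b \<Longrightarrow> b \<le> j \<Longrightarrow> y b < y a"
    and zero: "\<And>i. i \<in> {1..j} \<Longrightarrow> poly p (y i) = 0" and "k \<in> {1..j}"
  shows "kth_largest_zero p k = y k"
proof -
  have "p \<noteq> 0" using assms(1,4) by auto
  have "inj_on y {1..j}"
  proof (rule inj_onI)
    fix a b assume "a \<in> {1..j}" "b \<in> {1..j}" "y a = y b"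
    then show "a = b" using dec[of a b] dec[of b a] by (cases a b rule: linorder_cases) auto
  qed
  have roots: "{z. poly p z = 0} = y ` {1..j}"
  proof (rule card_seteq[symmetric])
    show "finite {z. poly p z = 0}" using \<open>p \<noteq> 0\<close> by (rule poly_roots_finite)
    show "y ` {1..j} \<subseteq> {z. poly p z = 0}" using zero by auto
    show "card {z. poly p z = 0} \<le> card (y ` {1..j})"
      using card_poly_roots_bound[OF \<open>p \<noteq> 0\<close>] assms(1) \<open>inj_on y {1..j}\<close> by (simp add: card_image)
  qed
  show ?thesis
    unfolding kth_largest_zero_def roots using dec assms(4) by (rule rev_sorted_list_of_set_image_nth)
qed

lemma kth_largest_zero_near_node:
  fixes x :: "nat \<Rightarrow> real" and p :: "real poly"
  assumes gap: "\<And>a b. 1 \<le> a \<Longrightarrow> a < b \<Longrightarrow> b \<le> j \<Longrightarrow> c \<le> x a - x b"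
    and "0 < \<delta>" "\<delta> < c / 2" "degree p = j"
    and close: "\<And>z. z \<in> (\<Union>i\<in>{1..j}. cball (x i) (c / 2)) \<Longrightarrow>
      \<bar>poly p z - poly (node_poly x j) z\<bar> \<le> \<eta>"
    and "\<eta> < \<delta> * (c / 2) ^ (j - 1)" "k \<in> {1..j}"
  shows "\<bar>kth_largest_zero p k - x k\<bar> < \<delta>"
proof -
  have "\<exists>y. \<bar>y - x i\<bar> < \<delta> \<and> poly p y = 0" if "i \<in> {1..j}" for i
  proof -
    have circle: "\<bar>poly p z - poly (node_poly x j) z\<bar> < \<delta> * (c / 2) ^ (j - 1)"
      if "\<bar>z - x i\<bar> = \<delta>" for z
    proof -
      have "z \<in> cball (x i) (c / 2)" using that assms(3) by (simp add: dist_real_def abs_minus_commute)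
      then have "z \<in> (\<Union>i\<in>{1..j}. cball (x i) (c / 2))" using \<open>i \<in> {1..j}\<close> by blast
      then show ?thesis using close assms(6) by (meson le_less_trans)
    qed
    have "\<delta> \<le> c / 2" using assms(3) by simp
    from gap assms(2) this that circle obtain y where "\<bar>y - x i\<bar> < \<delta>" "poly p y = 0"
      by (rule perturbed_node_poly_has_zero_near_node)
    then show ?thesis by blast
  qed
  then obtain y where y: "\<And>i. i \<in> {1..j} \<Longrightarrow> \<bar>y i - x i\<bar> < \<delta> \<and> poly p (y i) = 0"
    by metis
  \<comment> \<open>The windows around the nodes are disjoint, so the zeros \<open>y i\<close> inherit the order of the nodes.\<close>
  have "y b < y a" if "1 \<le> a" "a < b" "b \<le> j" for a b
  proof -
    have "y b < x b + \<delta>" "x a - \<delta> < y a" using y[of a] y[of b] that by auto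
    then show ?thesis using gap[OF that] assms(3) by linarith
  qed
  then have "kth_largest_zero p k = y k"
    using assms(4,7) y by (intro kth_largest_zero_eqI) auto
  then show ?thesis using y[OF assms(7)] by simp
qed

lemma gap_of_consecutive_gaps:
  fixes x :: "nat \<Rightarrow> real"
  assumes "\<forall>i\<in>{1..<N}. c \<le> x i - x (Suc i)" "0 \<le> c" "1 \<le> a" "a < b" "b \<le> N"
  shows "c \<le> x a - x b"
proof -
  have "Suc a \<le> b" using assms(4) by simp
  then show ?thesis using \<open>b \<le> N\<close>
  proof (induction b rule: dec_induct)
    case base
    then show ?case using assms(1,3) by auto
  next
    case (step n)
    then have "c \<le> x n - x (Suc n)" using assms(1,3) by auto
    then show ?case using step assms(2) by simp
  qed
qed

lemma inj_on_if_gap: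
  fixes x :: "nat \<Rightarrow> real"
  assumes "0 < c" and gap: "\<And>a b. 1 \<le> a \<Longrightarrow> a < b \<Longrightarrow> b \<le> N \<Longrightarrow> c \<le> x a - x b"
  shows "inj_on x {1..N}"
proof (rule linorder_inj_onI')
  fix a b assume "a \<in> {1..N}" "b \<in> {1..N}" "a < b"
  then show "x a \<noteq> x b" using gap[of a b] \<open>0 < c\<close> by auto
qed

lemma tilted_weight_pos:
  assumes "\<forall>l\<in>{1..N}. 0 < \<rho> l" "i \<in> {1..N}"
  shows "0 < tilted_weight N \<rho> x t i"
  unfolding tilted_weight_def using assms by (intro divide_pos_pos sum_pos) auto

lemma tilted_weight_mult_le:
  assumes "\<forall>l\<in>{1..N}. 0 < \<rho> l" "i \<in> {1..N}" "l \<in> {1..N}" "c \<le> x i - x l" "0 \<le> t"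
  shows "\<rho> i * tilted_weight N \<rho> x t l \<le> \<rho> l * tilted_weight N \<rho> x t i * (exp (- c * t))\<^sup>2"
proof -
  define Z where "Z = (\<Sum>l=1..N. \<rho> l * exp (2 * t * x l))"
  have "t * c \<le> t * (x i - x l)" using assms(4,5) by (rule mult_left_mono)
  then have "exp (2 * t * x l) \<le> exp (2 * t * x i) * (exp (- c * t))\<^sup>2"
    by (simp add: power2_eq_square algebra_simps flip: exp_add)
  moreover have "0 \<le> \<rho> i * \<rho> l / Z"
  proof -
    have "0 < \<rho> i" "0 < \<rho> l" using assms(1-3) by auto
    moreover have "0 \<le> Z" unfolding Z_def using assms(1) by (intro sum_nonneg) (auto intro: less_imp_le)
    ultimately show ?thesis by simp
  qed
  ultimately have "\<rho> i * \<rho> l / Z * exp (2 * t * x l)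
      \<le> \<rho> i * \<rho> l / Z * (exp (2 * t * x i) * (exp (- c * t))\<^sup>2)"
    by (rule mult_left_mono)
  then show ?thesis unfolding tilted_weight_def Z_def[symmetric] by (simp add: mult_ac)
qed

lemma is_monic_OP_tilted:
  assumes "\<forall>l\<in>{1..N}. 0 < \<rho> l" "inj_on x {1..N}" "j \<le> N"
  shows "is_monic_OP N (tilted_weight N \<rho> x t) x j (monic_OP N (tilted_weight N \<rho> x t) x j)"
  using assms by (intro is_monic_OP_monic_OP) (auto intro: tilted_weight_pos)

lemma tilted_monic_OP_node_value_le:
  assumes \<rho>: "\<forall>l\<in>{1..N}. 0 < \<rho> l" and "inj_on x {1..N}"
    and gap: "\<And>a b. 1 \<le> a \<Longrightarrow> a < b \<Longrightarrow> b \<le> N \<Longrightarrow> c \<le> x a - x b"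
    and "j \<le> N" "i \<in> {1..j}" "0 \<le> t"
  shows "\<rho> i * (poly (monic_OP N (tilted_weight N \<rho> x t) x j) (x i))\<^sup>2
    \<le> (\<Sum>l\<in>{Suc j..N}. \<rho> l * (poly (node_poly x j) (x l))\<^sup>2) * (exp (- c * t))\<^sup>2"
proof -
  define w where "w = tilted_weight N \<rho> x t"
  define v where "v = poly (monic_OP N w x j) (x i)"
  define Q where "Q = node_poly x j"
  have w_pos: "\<forall>l\<in>{1..N}. 0 < w l" unfolding w_def using \<rho> by (auto intro: tilted_weight_pos)
  have "0 \<le> \<rho> i" using \<rho> assms(4,5) by (auto intro: less_imp_le)
  have "w i * (\<rho> i * v\<^sup>2) = \<rho> i * (w i * v\<^sup>2)" by (simp add: mult_ac)
  also have "\<dots> \<le> \<rho> i * (\<Sum>l\<in>{Suc j..N}. w l * (poly Q (x l))\<^sup>2)"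
    unfolding v_def Q_def w_def using \<rho> assms(2,4,5) w_pos[unfolded w_def] \<open>0 \<le> \<rho> i\<close>
    by (intro mult_left_mono is_monic_OP_value_le is_monic_OP_tilted) auto
  also have "\<dots> \<le> (\<Sum>l\<in>{Suc j..N}. \<rho> l * w i * (exp (- c * t))\<^sup>2 * (poly Q (x l))\<^sup>2)"
    unfolding sum_distrib_left mult.assoc[symmetric] w_def using \<rho> assms(4-6) gap
    by (intro sum_mono mult_right_mono tilted_weight_mult_le) auto
  also have "\<dots> = w i * ((\<Sum>l\<in>{Suc j..N}. \<rho> l * (poly Q (x l))\<^sup>2) * (exp (- c * t))\<^sup>2)"
    by (simp add: sum_distrib_left sum_distrib_right mult_ac)
  finally show ?thesis
    using w_pos assms(4,5) unfolding v_def Q_def w_def by (simp add: mult_le_cancel_left_pos)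
qed

lemma degree_is_monic_OP_diff_node_poly:
  assumes "is_monic_OP N w x j p" "0 < j"
  shows "degree (p - node_poly x j) < j"
proof (cases "p = node_poly x j")
  case False
  have "degree p = j" "lead_coeff p = lead_coeff (node_poly x j)"
    using assms(1) unfolding is_monic_OP_def lead_coeff_node_poly by blast+
  then show ?thesis using degree_node_poly False by (intro degree_diff_less_if_lead_coeff_eq) auto
qed (use assms(2) in simp)

lemma tilted_monic_OP_close_to_node_poly:
  assumes \<rho>: "\<forall>l\<in>{1..N}. 0 < \<rho> l" and inj: "inj_on x {1..N}"
    and gap: "\<And>a b. 1 \<le> a \<Longrightarrow> a < b \<Longrightarrow> b \<le> N \<Longrightarrow> c \<le> x a - x b"
    and "j \<in> {1..N}" "compact S"
  obtains G where "\<And>t z. 0 \<le> t \<Longrightarrow> z \<in> S \<Longrightarrow>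
    \<bar>poly (monic_OP N (tilted_weight N \<rho> x t) x j) z - poly (node_poly x j) z\<bar> \<le> G * exp (- c * t)"
proof -
  define P where "P t = monic_OP N (tilted_weight N \<rho> x t) x j" for t
  define K where "K = (\<Sum>l\<in>{Suc j..N}. \<rho> l * (poly (node_poly x j) (x l))\<^sup>2)"
  define r where "r = Min (\<rho> ` {1..N})"
  define s where "s = sqrt (K / r)"
  have "0 < r" unfolding r_def using \<rho> assms(4) by (subst Min_gr_iff) auto
  have "0 \<le> K" unfolding K_def using \<rho> by (intro sum_nonneg) (simp add: less_imp_le)
  have node_value: "\<bar>poly (P t - node_poly x j) (x i)\<bar> \<le> s * exp (- c * t)"
    if "0 \<le> t" "i \<in> {1..j}" for t i
  proof -
    have "r \<le> \<rho> i" unfolding r_def using that(2) assms(4) by (intro Min_le) auto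
    then have "r * (poly (P t) (x i))\<^sup>2 \<le> \<rho> i * (poly (P t) (x i))\<^sup>2" by (simp add: mult_right_mono)
    also have "\<dots> \<le> K * (exp (- c * t))\<^sup>2"
      unfolding P_def K_def using assms(4) that by (intro tilted_monic_OP_node_value_le[OF \<rho> inj gap]) auto
    finally have "(poly (P t) (x i))\<^sup>2 \<le> (s * exp (- c * t))\<^sup>2"
      unfolding s_def using \<open>0 < r\<close> \<open>0 \<le> K\<close> by (simp add: power_mult_distrib field_simps)
    then have "\<bar>poly (P t) (x i)\<bar> \<le> \<bar>s * exp (- c * t)\<bar>" by (simp only: abs_le_square_iff)
    moreover have "0 \<le> s" unfolding s_def using \<open>0 < r\<close> \<open>0 \<le> K\<close> by simp
    ultimately show ?thesis using that(2) by (simp add: poly_node_poly_node abs_mult)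
  qed
  have "inj_on x {1..j}" using inj assms(4) by (auto intro: inj_on_subset)
  then obtain G where G: "\<And>p \<epsilon> z. degree p < j \<Longrightarrow> \<forall>i\<in>{1..j}. \<bar>poly p (x i)\<bar> \<le> \<epsilon> \<Longrightarrow> z \<in> S
      \<Longrightarrow> \<bar>poly p z\<bar> \<le> G * \<epsilon>"
    using poly_bounded_by_node_values[OF _ assms(5)] by blast
  have "degree (P t - node_poly x j) < j" for t
  proof -
    have "is_monic_OP N (tilted_weight N \<rho> x t) x j (P t)"
      unfolding P_def using assms(4) by (intro is_monic_OP_tilted[OF \<rho> inj]) auto
    then show ?thesis by (rule degree_is_monic_OP_diff_node_poly) (use assms(4) in auto)
  qed
  then have "\<bar>poly (P t) z - poly (node_poly x j) z\<bar> \<le> G * s * exp (- c * t)"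
    if "0 \<le> t" "z \<in> S" for t z
    using G[of "P t - node_poly x j" "s * exp (- c * t)" z] node_value that by (simp add: mult.assoc)
  then show thesis unfolding P_def by (rule that)
qed

lemma exp_neg_mult_tendsto_0:
  fixes c :: real
  assumes "0 < c"
  shows "((\<lambda>t. exp (- c * t)) \<longlongrightarrow> 0) at_top"
proof -
  have "filterlim (\<lambda>t. - c * t) at_bot at_top"
    using assms by (intro filterlim_tendsto_neg_mult_at_bot[OF tendsto_const] filterlim_ident) auto
  then show ?thesis by (rule filterlim_compose[OF exp_at_bot])
qed

lemma tendsto_and_bigo_if_exp_bound:
  fixes f :: "real \<Rightarrow> real"
  assumes "0 < c" and bound: "eventually (\<lambda>t. \<bar>f t - L\<bar> \<le> D * exp (- c * t)) at_top"
  shows "(f \<longlongrightarrow> L) at_top \<and> (\<lambda>t. \<bar>f t - L\<bar>) \<in> O[at_top](\<lambda>t. exp (- c * t))"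
proof
  have "eventually (\<lambda>t. norm (f t - L) \<le> D * exp (- c * t)) at_top" using bound by simp
  moreover have "((\<lambda>t. D * exp (- c * t)) \<longlongrightarrow> 0) at_top"
    using exp_neg_mult_tendsto_0[OF \<open>0 < c\<close>] by (rule tendsto_mult_right_zero)
  ultimately have "((\<lambda>t. f t - L) \<longlongrightarrow> 0) at_top" by (rule Lim_null_comparison)
  then show "(f \<longlongrightarrow> L) at_top" by (simp add: LIM_zero_iff)
  show "(\<lambda>t. \<bar>f t - L\<bar>) \<in> O[at_top](\<lambda>t. exp (- c * t))"
    using bound by (intro bigoI[of _ D]) simp
qed

lemma kth_largest_zero_tilted_eventually_close:
  assumes \<rho>: "\<forall>l\<in>{1..N}. 0 < \<rho> l" and inj: "inj_on x {1..N}"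
    and gap: "\<And>a b. 1 \<le> a \<Longrightarrow> a < b \<Longrightarrow> b \<le> N \<Longrightarrow> c \<le> x a - x b"
    and "0 < c" "j \<in> {1..N}" "k \<in> {1..j}"
  obtains D where "eventually (\<lambda>t.
    \<bar>kth_largest_zero (monic_OP N (tilted_weight N \<rho> x t) x j) k - x k\<bar> \<le> D * exp (- c * t)) at_top"
proof -
  define S where "S = (\<Union>i\<in>{1..j}. cball (x i) (c / 2))"
  have "compact S" unfolding S_def by (intro compact_UN) auto
  then obtain G where G: "\<And>t z. 0 \<le> t \<Longrightarrow> z \<in> S \<Longrightarrow>
      \<bar>poly (monic_OP N (tilted_weight N \<rho> x t) x j) z - poly (node_poly x j) z\<bar> \<le> G * exp (- c * t)"
    using tilted_monic_OP_close_to_node_poly[where x = x and c = c, OF \<rho> inj gap assms(5)] by blast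
  define P where "P t = monic_OP N (tilted_weight N \<rho> x t) x j" for t
  define m where "m = (c / 2) ^ (j - 1)"
  define D where "D = \<bar>G\<bar> / m + 1"
  have "0 < m" unfolding m_def using assms(4) by simp
  then have "0 < D" unfolding D_def by (simp add: add_nonneg_pos)
  have "((\<lambda>t. D * exp (- c * t)) \<longlongrightarrow> 0) at_top"
    using exp_neg_mult_tendsto_0[OF assms(4)] by (rule tendsto_mult_right_zero)
  then have "eventually (\<lambda>t. 0 \<le> t \<and> D * exp (- c * t) < c / 2) at_top"
    using assms(4) by (intro eventually_conj eventually_ge_at_top order_tendstoD(2)) auto
  then have "eventually (\<lambda>t. \<bar>kth_largest_zero (P t) k - x k\<bar> \<le> D * exp (- c * t)) at_top"
  proof (rule eventually_mono)
    fix t assume t: "0 \<le> t \<and> D * exp (- c * t) < c / 2"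
    define \<delta> where "\<delta> = D * exp (- c * t)"
    have "0 < \<delta>" unfolding \<delta>_def using \<open>0 < D\<close> by simp
    have "\<delta> * m = \<bar>G\<bar> * exp (- c * t) + m * exp (- c * t)"
      unfolding \<delta>_def D_def using \<open>0 < m\<close> by (simp add: field_simps)
    then have "\<bar>G\<bar> * exp (- c * t) < \<delta> * (c / 2) ^ (j - 1)"
      using \<open>0 < m\<close> by (simp add: m_def)
    moreover have "\<bar>poly (P t) z - poly (node_poly x j) z\<bar> \<le> \<bar>G\<bar> * exp (- c * t)" if "z \<in> S" for z
      using G[of t z] t that unfolding P_def
      by (smt (verit) abs_ge_self exp_gt_zero mult_right_mono)
    moreover have "degree (P t) = j"
      using is_monic_OP_tilted[OF \<rho> inj, of j t] assms(5) unfolding P_def is_monic_OP_def by auto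
    moreover have "\<And>a b. 1 \<le> a \<Longrightarrow> a < b \<Longrightarrow> b \<le> j \<Longrightarrow> c \<le> x a - x b"
      using gap assms(5) by auto
    ultimately have "\<bar>kth_largest_zero (P t) k - x k\<bar> < \<delta>"
      using \<open>0 < \<delta>\<close> t assms(6) unfolding S_def
      by (intro kth_largest_zero_near_node[where \<eta> = "\<bar>G\<bar> * exp (- c * t)"]) (auto simp: \<delta>_def)
    then show "\<bar>kth_largest_zero (P t) k - x k\<bar> \<le> D * exp (- c * t)" by (simp add: \<delta>_def)
  qed
  then show thesis unfolding P_def by (rule that)
qed

theorem theorem2p2:
  fixes N :: nat and x \<rho> :: "nat \<Rightarrow> real"
  assumes "N \<ge> 2"
    and "\<forall>i\<in>{1..<N}. x (Suc i) < x i"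
    and "\<forall>i\<in>{1..N}. \<rho> i > 0"
    and "(\<Sum>i=1..N. \<rho> i) = 1"
  defines "c \<equiv> Min ((\<lambda>i. x i - x (Suc i)) ` {1..<N})"
  shows "\<forall>j\<in>{1..N}. \<forall>k\<in>{1..j}.
     ((\<lambda>t. kth_largest_zero (monic_OP N (tilted_weight N \<rho> x t) x j) k) \<longlongrightarrow> x k) at_top
     \<and> (\<lambda>t. \<bar>kth_largest_zero (monic_OP N (tilted_weight N \<rho> x t) x j) k - x k\<bar>)
         \<in> O[at_top](\<lambda>t. exp (- c * t))"
proof (intro ballI)
  fix j k assume j: "j \<in> {1..N}" and k: "k \<in> {1..j}"
  have "0 < c" unfolding c_def using assms(1,2) by (subst Min_gr_iff) auto
  have "\<forall>i\<in>{1..<N}. c \<le> x i - x (Suc i)" unfolding c_def by simp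
  then have gap: "\<And>a b. 1 \<le> a \<Longrightarrow> a < b \<Longrightarrow> b \<le> N \<Longrightarrow> c \<le> x a - x b"
    using \<open>0 < c\<close> by (intro gap_of_consecutive_gaps) auto
  then have "inj_on x {1..N}" using \<open>0 < c\<close> by (intro inj_on_if_gap)
  then obtain D where "eventually (\<lambda>t. \<bar>kth_largest_zero (monic_OP N (tilted_weight N \<rho> x t) x j) k
      - x k\<bar> \<le> D * exp (- c * t)) at_top"
    by (rule kth_largest_zero_tilted_eventually_close[where x = x and c = c, OF assms(3) _ gap \<open>0 < c\<close> j k])
  with \<open>0 < c\<close> show "((\<lambda>t. kth_largest_zero (monic_OP N (tilted_weight N \<rho> x t) x j) k) \<longlongrightarrow> x k) at_top
    \<and> (\<lambda>t. \<bar>kth_largest_zero (monic_OP N (tilted_weight N \<rho> x t) x j) k - x k\<bar>)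
        \<in> O[at_top](\<lambda>t. exp (- c * t))"
    by (rule tendsto_and_bigo_if_exp_bound)
qed

end
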